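(* Let $G=HK$ for two normal subgroups $H$ and $K$ of the finite group $G$, let $p$ be a prime and $r\ge1$ an integer such that $H$ has exponent $p^r-1$. If $M(G,H,K)$ is trivial, then for every $i=1,\dots,k_K(H)$ one has $\alpha(p^r,i)=|L(p^r,i;h,K)|=1$.
   Context: All groups are finite; ${}^g x=gxg^{-1}$, $[x,y]=xyx^{-1}y^{-1}$. For normal subgroups $H,K$ of $G$, $H\wedge K$ is the group generated by symbols $h\wedge k$ ($h\in H,k\in K$) subject to $hh'\wedge k=({}^h h'\wedge {}^h k)(h\wedge k)$, $h\wedge kk'=(h\wedge k)({}^k h\wedge {}^k k')$, and $y\wedge y=1$ for $y\in H\cap K$; $\kappa':H\wedge K\to[H,K]$, $h\wedge k\mapsto[h,k]$, is an epimorphism and $M(G,H,K):=\ker\kappa'$. For $x\in H$, $C^\wedge_K(x)=\{k\in K:x\wedge k=1\}\le C_K(x)$. Let $h_1,\dots,h_{k_K(H)}$ be representatives of the $K$-conjugacy classes in $H$ ($k_K(H)$ = number of such classes). Define $\alpha(m,i)=|C_K(h_i^m)|/|C_K(h_i)|$ and $|L(m,i;h,K)|=|C_K(h_i^m):C^\wedge_K(h_i^m)|$, the order of $L(m,i;h,K)=C_K(h_i^m)/C^\wedge_K(h_i^m)$. *)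

theory Defs
  imports "HOL-Algebra.Algebra"
begin

definition conjg :: "('a, 'b) monoid_scheme \<Rightarrow> 'a \<Rightarrow> 'a \<Rightarrow> 'a" where
  "conjg G g x = g \<otimes>\<^bsub>G\<^esub> x \<otimes>\<^bsub>G\<^esub> inv\<^bsub>G\<^esub> g"

definition commg :: "('a, 'b) monoid_scheme \<Rightarrow> 'a \<Rightarrow> 'a \<Rightarrow> 'a" where
  "commg G x y = x \<otimes>\<^bsub>G\<^esub> y \<otimes>\<^bsub>G\<^esub> inv\<^bsub>G\<^esub> x \<otimes>\<^bsub>G\<^esub> inv\<^bsub>G\<^esub> y"

text \<open>Words in the free group on the symbols h \<and> k: a letter (b,(h,k)) stands for
  (h \<and> k) if b = False and for its inverse if b = True.\<close>
type_synonym 'a wword = "(bool \<times> 'a \<times> 'a) list"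

definition wgens :: "'a set \<Rightarrow> 'a set \<Rightarrow> (bool \<times> 'a \<times> 'a) set" where
  "wgens H K = UNIV \<times> (H \<times> K)"

text \<open>The congruence on words whose quotient is the non-abelian exterior product H \<and> K:
  the smallest congruence (w.r.t. concatenation) containing free cancellation and the
  defining relations.\<close>
inductive wedge_eqv :: "('a, 'b) monoid_scheme \<Rightarrow> 'a set \<Rightarrow> 'a set \<Rightarrow> 'a wword \<Rightarrow> 'a wword \<Rightarrow> bool"
  for G H K where
  refl: "wedge_eqv G H K w w"
| sym: "wedge_eqv G H K u w \<Longrightarrow> wedge_eqv G H K w u"
| trans: "wedge_eqv G H K u v \<Longrightarrow> wedge_eqv G H K v w \<Longrightarrow> wedge_eqv G H K u w"
| ctx: "wedge_eqv G H K a b \<Longrightarrow> set u \<subseteq> wgens H K \<Longrightarrow> set v \<subseteq> wgens H K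
        \<Longrightarrow> wedge_eqv G H K (u @ a @ v) (u @ b @ v)"
| cancel: "h \<in> H \<Longrightarrow> k \<in> K \<Longrightarrow> wedge_eqv G H K [(e, (h, k)), (\<not> e, (h, k))] []"
| rel1: "h \<in> H \<Longrightarrow> h' \<in> H \<Longrightarrow> k \<in> K \<Longrightarrow>
     wedge_eqv G H K [(False, (h \<otimes>\<^bsub>G\<^esub> h', k))]
       [(False, (conjg G h h', conjg G h k)), (False, (h, k))]"
| rel2: "h \<in> H \<Longrightarrow> k \<in> K \<Longrightarrow> k' \<in> K \<Longrightarrow>
     wedge_eqv G H K [(False, (h, k \<otimes>\<^bsub>G\<^esub> k'))]
       [(False, (h, k)), (False, (conjg G k h, conjg G k k'))]"
| rel3: "y \<in> H \<inter> K \<Longrightarrow> wedge_eqv G H K [(False, (y, y))] []"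

text \<open>The map \<kappa>' : H \<and> K \<rightarrow> [H,K] on words, h \<and> k \<mapsto> [h,k].\<close>
fun kappa_word :: "('a, 'b) monoid_scheme \<Rightarrow> 'a wword \<Rightarrow> 'a" where
  "kappa_word G [] = \<one>\<^bsub>G\<^esub>"
| "kappa_word G ((b, (h, k)) # w) =
     (if b then inv\<^bsub>G\<^esub> (commg G h k) else commg G h k) \<otimes>\<^bsub>G\<^esub> kappa_word G w"

text \<open>M(G,H,K) = ker \<kappa>' is trivial.\<close>
definition M_trivial :: "('a, 'b) monoid_scheme \<Rightarrow> 'a set \<Rightarrow> 'a set \<Rightarrow> bool" where
  "M_trivial G H K \<longleftrightarrow> (\<forall>w. set w \<subseteq> wgens H K \<longrightarrow> kappa_word G w = \<one>\<^bsub>G\<^esub> \<longrightarrow> wedge_eqv G H K w [])"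

definition centralizer_in :: "('a, 'b) monoid_scheme \<Rightarrow> 'a set \<Rightarrow> 'a \<Rightarrow> 'a set" where
  "centralizer_in G K x = {k \<in> K. k \<otimes>\<^bsub>G\<^esub> x = x \<otimes>\<^bsub>G\<^esub> k}"

definition wedge_centralizer :: "('a, 'b) monoid_scheme \<Rightarrow> 'a set \<Rightarrow> 'a set \<Rightarrow> 'a \<Rightarrow> 'a set" where
  "wedge_centralizer G H K x = {k \<in> K. wedge_eqv G H K [(False, (x, k))] []}"

definition kclass :: "('a, 'b) monoid_scheme \<Rightarrow> 'a set \<Rightarrow> 'a \<Rightarrow> 'a set" where
  "kclass G K h = {conjg G k h | k. k \<in> K}"

definition num_kclasses :: "('a, 'b) monoid_scheme \<Rightarrow> 'a set \<Rightarrow> 'a set \<Rightarrow> nat" where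
  "num_kclasses G K H = card (kclass G K ` H)"

definition group_exponent :: "('a, 'b) monoid_scheme \<Rightarrow> 'a set \<Rightarrow> nat" where
  "group_exponent G H = (LEAST e::nat. 0 < e \<and> (\<forall>x\<in>H. x [^]\<^bsub>G\<^esub> e = \<one>\<^bsub>G\<^esub>))"

definition alpha :: "('a, 'b) monoid_scheme \<Rightarrow> 'a set \<Rightarrow> (nat \<Rightarrow> 'a) \<Rightarrow> nat \<Rightarrow> nat \<Rightarrow> real" where
  "alpha G K hs m i = real (card (centralizer_in G K (hs i [^]\<^bsub>G\<^esub> m)))
                     / real (card (centralizer_in G K (hs i)))"

definition L_order :: "('a, 'b) monoid_scheme \<Rightarrow> 'a set \<Rightarrow> 'a set \<Rightarrow> (nat \<Rightarrow> 'a) \<Rightarrow> nat \<Rightarrow> nat \<Rightarrow> real" where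
  "L_order G H K hs m i = real (card (centralizer_in G K (hs i [^]\<^bsub>G\<^esub> m)))
                     / real (card (wedge_centralizer G H K (hs i [^]\<^bsub>G\<^esub> m)))"

end

theory Submission
  imports Defs
begin

text \<open>
  Let x \<in> H.  Since H has exponent p^r - 1, every element of H satisfies
  x^(p^r) = x^(p^r - 1) x = x, so the representatives are fixed by the p^r-th power map and
  \<alpha>(p^r,i) = |C_K(h_i)| / |C_K(h_i)| = 1.  For L we show C^\<and>_K(x) = C_K(x):
  \<^item> C^\<and>_K(x) \<subseteq> C_K(x) always, because the commutator map \<kappa>' is well defined on H \<and> K,
    i.e. it is invariant under the congruence defining the exterior product; so x \<and> k = 1
    forces [x,k] = 1;
  \<^item> C_K(x) \<subseteq> C^\<and>_K(x) when M(G,H,K) = ker \<kappa>' is trivial, since [x,k] = 1 means that the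
    one-letter word x \<and> k lies in ker \<kappa>'.
\<close>

lemma (in group) cancel_left: "x \<in> carrier G \<Longrightarrow> y \<in> carrier G \<Longrightarrow> x \<otimes> (inv x \<otimes> y) = y"
  by (simp add: m_assoc[symmetric])

lemma (in group) cancel_inv_left: "x \<in> carrier G \<Longrightarrow> y \<in> carrier G \<Longrightarrow> inv x \<otimes> (x \<otimes> y) = y"
  by (simp add: m_assoc[symmetric])

lemma (in group) commg_mult_left:
  assumes "h \<in> carrier G" "h' \<in> carrier G" "k \<in> carrier G"
  shows "commg G (h \<otimes> h') k = commg G (conjg G h h') (conjg G h k) \<otimes> commg G h k"
  using assms by (simp add: commg_def conjg_def m_assoc inv_mult_group cancel_left cancel_inv_left)

lemma (in group) commg_mult_right:
  assumes "h \<in> carrier G" "k \<in> carrier G" "k' \<in> carrier G"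
  shows "commg G h (k \<otimes> k') = commg G h k \<otimes> commg G (conjg G k h) (conjg G k k')"
  using assms by (simp add: commg_def conjg_def m_assoc inv_mult_group cancel_left cancel_inv_left)

lemma (in group) commg_closed [simp]:
  "x \<in> carrier G \<Longrightarrow> y \<in> carrier G \<Longrightarrow> commg G x y \<in> carrier G"
  by (simp add: commg_def)

lemma (in group) commg_eq_one_iff:
  assumes "x \<in> carrier G" "k \<in> carrier G"
  shows "commg G x k = \<one> \<longleftrightarrow> k \<otimes> x = x \<otimes> k"
proof -
  have "commg G x k = (x \<otimes> k) \<otimes> inv (k \<otimes> x)"
    using assms by (simp add: commg_def inv_mult_group m_assoc)
  also have "\<dots> = \<one> \<longleftrightarrow> x \<otimes> k = k \<otimes> x"
    using assms inv_solve_right'[of \<one> "x \<otimes> k" "k \<otimes> x"] by simp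
  finally show ?thesis by auto
qed

lemma (in group) kappa_word_closed:
  assumes "H \<subseteq> carrier G" "K \<subseteq> carrier G" "set w \<subseteq> wgens H K"
  shows "kappa_word G w \<in> carrier G"
  using assms(3)
proof (induction w)
  case (Cons a w)
  obtain b h k where a: "a = (b, (h, k))" by (cases a) auto
  have "h \<in> carrier G" "k \<in> carrier G"
    using Cons.prems a assms(1,2) by (auto simp: wgens_def)
  with Cons a show ?case by simp
qed simp

lemma (in group) kappa_word_append:
  assumes "H \<subseteq> carrier G" "K \<subseteq> carrier G" "set u \<subseteq> wgens H K" "set v \<subseteq> wgens H K"
  shows "kappa_word G (u @ v) = kappa_word G u \<otimes> kappa_word G v"
  using assms(3)
proof (induction u)
  case Nil
  then show ?case using kappa_word_closed[OF assms(1,2,4)] by simp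
next
  case (Cons a u)
  obtain b h k where a: "a = (b, (h, k))" by (cases a) auto
  have "h \<in> carrier G" "k \<in> carrier G" "set u \<subseteq> wgens H K"
    using Cons.prems a assms(1,2) by (auto simp: wgens_def)
  with Cons.IH a kappa_word_closed[OF assms(1,2)] assms(4) show ?case
    by (simp add: m_assoc)
qed

text \<open>Well-definedness of \<kappa>' : H \<and> K \<rightarrow> [H,K]: the congruence defining the exterior product
  preserves being a word in the generators and, on such words, the value of \<kappa>'.\<close>
lemma (in group) wedge_eqv_kappa:
  assumes HN: "H \<lhd> G" and KN: "K \<lhd> G"
    and "wedge_eqv G H K u w"
  shows "(set u \<subseteq> wgens H K \<longleftrightarrow> set w \<subseteq> wgens H K)
         \<and> (set u \<subseteq> wgens H K \<longrightarrow> kappa_word G u = kappa_word G w)"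
  using assms(3)
proof (induction rule: wedge_eqv.induct)
  have sH: "subgroup H G" and sK: "subgroup K G"
    using HN KN normal_imp_subgroup by blast+
  have Hs: "H \<subseteq> carrier G" and Ks: "K \<subseteq> carrier G"
    using sH sK subgroup.subset by blast+
  have conj_H: "conjg G g h \<in> H" if "g \<in> carrier G" "h \<in> H" for g h
    using normal.inv_op_closed2[OF HN that] by (simp add: conjg_def)
  have conj_K: "conjg G g k \<in> K" if "g \<in> carrier G" "k \<in> K" for g k
    using normal.inv_op_closed2[OF KN that] by (simp add: conjg_def)
  {
    case (ctx a b u v)
    have gen_iff: "set (u @ c @ v) \<subseteq> wgens H K \<longleftrightarrow> set c \<subseteq> wgens H K" for c
      using ctx.hyps(2,3) by auto
    show ?case
    proof (intro conjI impI)
      show "set (u @ a @ v) \<subseteq> wgens H K \<longleftrightarrow> set (u @ b @ v) \<subseteq> wgens H K"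
        using gen_iff ctx.IH by blast
      assume "set (u @ a @ v) \<subseteq> wgens H K"
      then have "set a \<subseteq> wgens H K" "set b \<subseteq> wgens H K" using gen_iff ctx.IH by blast+
      with ctx.IH ctx.hyps(2,3) show "kappa_word G (u @ a @ v) = kappa_word G (u @ b @ v)"
        by (simp add: kappa_word_append[OF Hs Ks])
    qed
  next
    case (cancel h k e)
    then have "commg G h k \<in> carrier G" using Hs Ks by (blast intro: commg_closed)
    with cancel show ?case by (auto simp: wgens_def)
  next
    case (rel1 h h' k)
    have "h \<otimes> h' \<in> H" "conjg G h h' \<in> H" "conjg G h k \<in> K"
      using rel1 Hs subgroup.m_closed[OF sH] conj_H conj_K by auto
    moreover have "h \<in> carrier G" "h' \<in> carrier G" "k \<in> carrier G"
      "conjg G h h' \<in> carrier G" "conjg G h k \<in> carrier G"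
      using rel1 calculation Hs Ks by blast+
    ultimately show ?case using rel1 by (simp add: wgens_def commg_mult_left m_assoc)
  next
    case (rel2 h k k')
    have "k \<otimes> k' \<in> K" "conjg G k k' \<in> K" "conjg G k h \<in> H"
      using rel2 Ks subgroup.m_closed[OF sK] conj_H conj_K by auto
    moreover have "h \<in> carrier G" "k \<in> carrier G" "k' \<in> carrier G"
      "conjg G k h \<in> carrier G" "conjg G k k' \<in> carrier G"
      using rel2 calculation Hs Ks by blast+
    ultimately show ?case using rel2 by (simp add: wgens_def commg_mult_right m_assoc)
  next
    case (rel3 y)
    then have "commg G y y = \<one>" using Hs by (auto simp: commg_def m_assoc cancel_left)
    then show ?case using rel3 by (auto simp: wgens_def)
  }
qed auto

lemma (in group) wedge_centralizer_subset:
  assumes HN: "H \<lhd> G" and KN: "K \<lhd> G" and x: "x \<in> H"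
  shows "wedge_centralizer G H K x \<subseteq> centralizer_in G K x"
proof
  fix k assume "k \<in> wedge_centralizer G H K x"
  then have k: "k \<in> K" and triv: "wedge_eqv G H K [(False, (x, k))] []"
    by (auto simp: wedge_centralizer_def)
  have xc: "x \<in> carrier G" and kc: "k \<in> carrier G"
    using x k HN KN normal_imp_subgroup subgroup.subset by blast+
  have "kappa_word G [(False, (x, k))] = \<one>"
    using wedge_eqv_kappa[OF HN KN triv] x k by (simp add: wgens_def)
  then have "commg G x k = \<one>" using xc kc by simp
  then show "k \<in> centralizer_in G K x"
    using k commg_eq_one_iff[OF xc kc] by (simp add: centralizer_in_def)
qed

lemma (in group) centralizer_subset_wedge_centralizer:
  assumes "H \<subseteq> carrier G" "K \<subseteq> carrier G" "M_trivial G H K" and x: "x \<in> H"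
  shows "centralizer_in G K x \<subseteq> wedge_centralizer G H K x"
proof
  fix k assume "k \<in> centralizer_in G K x"
  then have k: "k \<in> K" "k \<otimes> x = x \<otimes> k" by (auto simp: centralizer_in_def)
  have xc: "x \<in> carrier G" and kc: "k \<in> carrier G" using assms(1,2) x k by blast+
  have "kappa_word G [(False, (x, k))] = \<one>"
    using commg_eq_one_iff[OF xc kc] k xc kc by simp
  with assms(3) x k have "wedge_eqv G H K [(False, (x, k))] []"
    by (auto simp: M_trivial_def wgens_def)
  with k show "k \<in> wedge_centralizer G H K x" by (simp add: wedge_centralizer_def)
qed

lemma (in group) pow_group_exponent_Suc:
  assumes "finite (carrier G)" "H \<subseteq> carrier G" "x \<in> H"
  shows "x [^] Suc (group_exponent G H) = x"
proof -
  have "\<exists>e::nat. 0 < e \<and> (\<forall>y\<in>H. y [^] e = \<one>)"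
    using assms(1,2) pow_order_eq_1 order_gt_0_iff_finite by blast
  then have "\<forall>y\<in>H. y [^] group_exponent G H = \<one>"
    unfolding group_exponent_def by (rule LeastI2_ex) blast
  with assms show ?thesis by auto
qed

theorem mainTheorem3:
  fixes G (structure) and H K :: "'a set" and p r :: nat and hs :: "nat \<Rightarrow> 'a"
  assumes "group G" and "finite (carrier G)"
    and "H \<lhd> G" and "K \<lhd> G" and "H <#> K = carrier G"
    and "Factorial_Ring.prime p" and "1 \<le> r"
    and "group_exponent G H = p ^ r - 1"
    and "\<forall>i\<in>{1..num_kclasses G K H}. hs i \<in> H"
    and "bij_betw (\<lambda>i. kclass G K (hs i)) {1..num_kclasses G K H} (kclass G K ` H)"
    and "M_trivial G H K"
  shows "\<forall>i\<in>{1..num_kclasses G K H}.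
           alpha G K hs (p ^ r) i = 1 \<and> L_order G H K hs (p ^ r) i = 1"
proof
  interpret group G by fact
  have Hs: "H \<subseteq> carrier G" and Ks: "K \<subseteq> carrier G"
    using assms(3,4) normal_imp_subgroup subgroup.subset by blast+
  fix i assume "i \<in> {1..num_kclasses G K H}"
  then have x: "hs i \<in> H" using assms(9) by blast
  have "0 < p ^ r" using assms(6) prime_gt_0_nat by simp
  then have "p ^ r = Suc (group_exponent G H)" using assms(8) by simp
  then have fixed: "hs i [^] (p ^ r) = hs i"
    using pow_group_exponent_Suc[OF assms(2) Hs x] by simp
  have wedge: "wedge_centralizer G H K (hs i) = centralizer_in G K (hs i)"
    using wedge_centralizer_subset[OF assms(3,4) x]
      centralizer_subset_wedge_centralizer[OF Hs Ks assms(11) x] by blast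
  have "\<one> \<in> centralizer_in G K (hs i)"
    using x Hs assms(4) normal_imp_subgroup subgroup.one_closed by (fastforce simp: centralizer_in_def)
  moreover have "finite (centralizer_in G K (hs i))"
    using assms(2) Ks by (auto simp: centralizer_in_def intro: finite_subset)
  ultimately have "card (centralizer_in G K (hs i)) \<noteq> 0" by auto
  then show "alpha G K hs (p ^ r) i = 1 \<and> L_order G H K hs (p ^ r) i = 1"
    by (simp add: alpha_def L_order_def fixed wedge)
qed

end
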